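(* Let $A$ be a finite alphabet, let $x_1x_2x_3\dots$ be an infinite sequence of letters of $A$, let $m\ge 1$, and let $\varphi_1,\dots,\varphi_m$ be data compressors, i.e. maps from finite words over $A$ to finite binary words. Assume that for every $i=1,\dots,m$ the limit $$\lambda_i=\lim_{n\to\infty}\frac{|\varphi_i(x_1x_2\dots x_n)|}{n}$$ exists. Fix $\delta>0$ and let $\Phi_1^\delta$ be the following method: given $x_1\dots x_n$, put $r=\lfloor \delta T/v\rfloor=\lfloor \delta n\rfloor$ (where $v>0$ is an upper bound on the per-letter encoding time of all $\varphi_i$ and $T=nv$), compute $|\varphi_1(x_1\dots x_r)|,\dots,|\varphi_m(x_1\dots x_r)|$, choose an index $s=s(n)\in\{1,\dots,m\}$ with $|\varphi_s(x_1\dots x_r)|=\min_{1\le i\le m}|\varphi_i(x_1\dots x_r)|$, and output the codeword $\langle s\rangle\,\varphi_s(x_1\dots x_n)$, where $\langle s\rangle$ is a $\lceil\log_2 m\rceil$-bit binary representation of $s$. Thus $|\Phi_1^\delta(x_1\dots x_n)|=\lceil\log_2 m\rceil+|\varphi_{s(n)}(x_1\dots x_n)|$. Then $$\lim_{n\to\infty}\frac{|\Phi_1^\delta(x_1x_2\dots x_n)|}{n}=\min_{i=1,\dots,m}\lim_{n\to\infty}\frac{|\varphi_i(x_1x_2\dots x_n)|}{n},$$ i.e. $\Phi_1^\delta$ is time-universal.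
   Context: $|w|$ denotes the length of a binary word $w$. A compressing method is called time-universal if the limit of its per-letter codeword length equals the infimum over the given compressors of their limiting per-letter codeword lengths. The prefix $x_1\dots x_r$ refers to the given infinite sequence (for $r=0$ it is the empty word). *)

theory Defs
  imports Complex_Main
begin

text \<open>Prefix x_1 ... x_n of an infinite sequence (x is indexed from 0, so x_k = x (k-1)).\<close>
definition prefix :: "(nat \<Rightarrow> 'a) \<Rightarrow> nat \<Rightarrow> 'a list" where
  "prefix x n = map x [0..<n]"

fun bits :: "nat \<Rightarrow> nat \<Rightarrow> bool list" where
  "bits 0 k = []"
| "bits (Suc l) k = odd k # bits l (k div 2)"

definition index_code :: "nat \<Rightarrow> nat \<Rightarrow> bool list" where
  "index_code m s = bits (nat \<lceil>log 2 (real m)\<rceil>) (s - 1)"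

definition trial_len :: "real \<Rightarrow> nat \<Rightarrow> nat" where
  "trial_len \<delta> n = nat \<lfloor>\<delta> * real n\<rfloor>"

definition valid_selection ::
  "nat \<Rightarrow> real \<Rightarrow> (nat \<Rightarrow> 'a list \<Rightarrow> bool list) \<Rightarrow> (nat \<Rightarrow> 'a) \<Rightarrow> (nat \<Rightarrow> nat) \<Rightarrow> bool" where
  "valid_selection m \<delta> \<phi> x s \<longleftrightarrow>
     (\<forall>n. s n \<in> {1..m} \<and>
          length (\<phi> (s n) (prefix x (trial_len \<delta> n))) =
            Min ((\<lambda>i. length (\<phi> i (prefix x (trial_len \<delta> n)))) ` {1..m}))"

definition Phi1 ::
  "nat \<Rightarrow> (nat \<Rightarrow> 'a list \<Rightarrow> bool list) \<Rightarrow> (nat \<Rightarrow> nat) \<Rightarrow> (nat \<Rightarrow> 'a) \<Rightarrow> nat \<Rightarrow> bool list" where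
  "Phi1 m \<phi> s x n = index_code m (s n) @ \<phi> (s n) (prefix x n)"

end

theory Submission
  imports Defs
begin

text \<open>The index s(n) is selected on the prefix of length r = \<lfloor>\<delta> n\<rfloor>, which tends to
  infinity. If the limit of |\<phi> j(x_1\<dots>x_n)|/n exceeds the minimal limit, attained by
  some k, then eventually |\<phi> k(x_1\<dots>x_r)| < |\<phi> j(x_1\<dots>x_r)|, so j is eventually never
  selected. Hence from some point on s(n) ranges only over the finitely many minimisers of
  the limits, along each of which the per-letter length tends to the minimum. The index code
  adds a constant number of bits, which vanishes per letter.\<close>

lemma eventually_less_of_tendsto:
  fixes f g :: "'b \<Rightarrow> 'a::linorder_topology"
  assumes f: "(f \<longlongrightarrow> a) F" and g: "(g \<longlongrightarrow> b) F" and "a < b"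
  shows "eventually (\<lambda>x. f x < g x) F"
proof -
  obtain u v where uv: "a < u" "v < b" "{..<u} \<inter> {v<..} = {}"
    using less_separate[OF \<open>a < b\<close>] by blast
  have "eventually (\<lambda>x. f x < u) F" "eventually (\<lambda>x. v < g x) F"
    using f g uv by (auto intro: order_tendstoD)
  then show ?thesis
  proof eventually_elim
    case (elim x)
    then have "f x \<le> v"
      using uv(3) by (auto simp: disjoint_iff not_less[symmetric])
    then show ?case
      using elim(2) by (rule le_less_trans)
  qed
qed

lemma eventually_selection_in_argmin:
  fixes g :: "'i \<Rightarrow> 'b \<Rightarrow> 'a::linorder_topology"
  assumes "finite I" and lim: "\<forall>i\<in>I. (g i \<longlongrightarrow> L i) F"
    and sel: "eventually (\<lambda>n. s n \<in> I \<and> (\<forall>i\<in>I. g (s n) n \<le> g i n)) F"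
  shows "eventually (\<lambda>n. L (s n) = Min (L ` I)) F"
proof -
  have avoid: "eventually (\<lambda>n. s n \<noteq> j) F" if j: "j \<in> I" "L j \<noteq> Min (L ` I)" for j
  proof -
    have "Min (L ` I) \<in> L ` I"
      using \<open>finite I\<close> j(1) by (intro Min_in) auto
    then obtain k where k: "k \<in> I" "L k = Min (L ` I)"
      by (metis imageE)
    have "L k \<le> L j"
      using k(2) j(1) \<open>finite I\<close> by simp
    with k(2) j(2) have "L k < L j"
      by simp
    then have "eventually (\<lambda>n. g k n < g j n) F"
      using lim k(1) j(1) by (intro eventually_less_of_tendsto) auto
    with sel show ?thesis
      by eventually_elim (use k(1) in \<open>auto simp: not_less[symmetric]\<close>)
  qed
  have "eventually (\<lambda>n. \<forall>j\<in>{j\<in>I. L j \<noteq> Min (L ` I)}. s n \<noteq> j) F"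
    using avoid \<open>finite I\<close> by (subst eventually_ball_finite_distrib) auto
  with sel show ?thesis
    by eventually_elim auto
qed

lemma tendsto_selection:
  fixes f :: "'i \<Rightarrow> 'b \<Rightarrow> 'a::topological_space"
  assumes "finite I" and lim: "\<forall>i\<in>I. (f i \<longlongrightarrow> L i) F"
    and sel: "eventually (\<lambda>n. s n \<in> I \<and> L (s n) = c) F"
  shows "((\<lambda>n. f (s n) n) \<longlongrightarrow> c) F"
proof (rule topological_tendstoI)
  fix S assume "open S" "c \<in> S"
  then have "eventually (\<lambda>n. \<forall>i\<in>{i\<in>I. L i = c}. f i n \<in> S) F"
    using lim \<open>finite I\<close> by (subst eventually_ball_finite_distrib) (auto dest: topological_tendstoD)
  with sel show "eventually (\<lambda>n. f (s n) n \<in> S) F"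
    by eventually_elim auto
qed

lemma trial_len_at_top:
  assumes "\<delta> > 0"
  shows "filterlim (trial_len \<delta>) at_top sequentially"
proof -
  have "filterlim (\<lambda>n. \<delta> * real n) at_top sequentially"
    using filterlim_tendsto_pos_mult_at_top[OF tendsto_const assms filterlim_real_sequentially] .
  then have "filterlim (\<lambda>n. \<lfloor>\<delta> * real n\<rfloor>) at_top sequentially"
    by (rule filterlim_compose[OF filterlim_floor_sequentially])
  then show ?thesis
    unfolding trial_len_def by (rule filterlim_compose[OF filterlim_nat_sequentially])
qed

lemma length_bits: "length (bits l k) = l"
  by (induct l arbitrary: k) auto

lemma length_index_code: "length (index_code m s) = nat \<lceil>log 2 (real m)\<rceil>"
  unfolding index_code_def by (rule length_bits)

theorem claim1:
  fixes A :: "'a set" and x :: "nat \<Rightarrow> 'a" and m :: nat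
    and \<phi> :: "nat \<Rightarrow> 'a list \<Rightarrow> bool list" and \<delta> :: real and s :: "nat \<Rightarrow> nat"
  assumes "finite A" and "\<forall>n. x n \<in> A" and "m \<ge> 1"
    and "\<forall>i\<in>{1..m}. convergent (\<lambda>n. real (length (\<phi> i (prefix x n))) / real n)"
    and "\<delta> > 0"
    and "valid_selection m \<delta> \<phi> x s"
  shows "(\<lambda>n. real (length (Phi1 m \<phi> s x n)) / real n) \<longlonglongrightarrow>
           Min ((\<lambda>i. lim (\<lambda>n. real (length (\<phi> i (prefix x n))) / real n)) ` {1..m})"
proof -
  define f where "f i n = real (length (\<phi> i (prefix x n))) / real n" for i n
  define L where "L i = lim (f i)" for i
  define c where "c = real (nat \<lceil>log 2 (real m)\<rceil>)"
  have lim: "\<forall>i\<in>{1..m}. f i \<longlonglongrightarrow> L i"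
    using assms(4) unfolding f_def L_def by (simp add: convergent_LIMSEQ_iff)
  then have "\<forall>i\<in>{1..m}. (\<lambda>n. f i (trial_len \<delta> n)) \<longlonglongrightarrow> L i"
    using filterlim_compose trial_len_at_top[OF \<open>\<delta> > 0\<close>] by blast
  moreover have "\<forall>n. s n \<in> {1..m} \<and> (\<forall>i\<in>{1..m}. f (s n) (trial_len \<delta> n) \<le> f i (trial_len \<delta> n))"
    using assms(6) unfolding valid_selection_def f_def by (auto intro!: divide_right_mono)
  ultimately have "eventually (\<lambda>n. L (s n) = Min (L ` {1..m})) sequentially"
    by (intro eventually_selection_in_argmin) auto
  then have "(\<lambda>n. f (s n) n) \<longlonglongrightarrow> Min (L ` {1..m})"
    using assms(6) lim unfolding valid_selection_def by (intro tendsto_selection) auto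
  then have "(\<lambda>n. c / real n + f (s n) n) \<longlonglongrightarrow> 0 + Min (L ` {1..m})"
    by (intro tendsto_add tendsto_divide_0[OF tendsto_const] filterlim_real_sequentially
        filterlim_at_top_imp_at_infinity)
  moreover have "real (length (Phi1 m \<phi> s x n)) / real n = c / real n + f (s n) n" for n
    unfolding Phi1_def f_def c_def by (simp add: length_index_code add_divide_distrib)
  ultimately show ?thesis
    unfolding L_def f_def by simp
qed

end
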